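(* Let $A$ be a cubic graph with $v(A)\equiv 0\pmod 6$, let $a\in V(A)$ with $N(a,A)=\{a_1,a_2,a_3\}$, and suppose $A$ has no $\Lambda$-factor containing the edge $e=aa_1$. Let $G=Y(A,a)$. Then $v(G)\equiv 0\pmod 6$ and $G$ has no $\Lambda$-factor.
   Context: Graphs are finite, undirected, without loops or multiple edges; $v(G)=|V(G)|$; $N(x,G)$ is the set of neighbours of $x$. $Y(A,a)$ is defined as follows: take three disjoint copies $A^1,A^2,A^3$ of $A$, where $a^i,a^i_1,a^i_2,a^i_3$ denote the copies in $A^i$ of $a,a_1,a_2,a_3$; form $(A^1-a^1)\cup(A^2-a^2)\cup(A^3-a^3)$ and add three new vertices $z_1,z_2,z_3$ and the nine new edges $z_ja^i_j$, $i,j\in\{1,2,3\}$. A $\Lambda$-factor of a graph is a spanning subgraph each of whose components is a path on 3 vertices; it contains an edge $e$ if $e$ is an edge of it. *)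

theory Defs
  imports Main
begin

definition simple_graph :: "'a set \<Rightarrow> 'a set set \<Rightarrow> bool" where
  "simple_graph V E \<longleftrightarrow> finite V \<and>
     (\<forall>e\<in>E. \<exists>x y. x \<in> V \<and> y \<in> V \<and> x \<noteq> y \<and> e = {x, y})"

definition nbhd :: "'a set set \<Rightarrow> 'a \<Rightarrow> 'a set" where
  "nbhd E x = {y. {x, y} \<in> E}"

definition cubic :: "'a set \<Rightarrow> 'a set set \<Rightarrow> bool" where
  "cubic V E \<longleftrightarrow> simple_graph V E \<and> (\<forall>x\<in>V. card (nbhd E x) = 3)"

definition comp :: "'a set set \<Rightarrow> 'a \<Rightarrow> 'a set" where
  "comp F x = {y. (\<lambda>u w. {u, w} \<in> F)\<^sup>*\<^sup>* x y}"

text \<open>F is (the edge set of) a Lambda-factor of (V,E): a spanning subgraph each of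
  whose components is a path on 3 vertices.\<close>
definition lambda_factor :: "'a set \<Rightarrow> 'a set set \<Rightarrow> 'a set set \<Rightarrow> bool" where
  "lambda_factor V E F \<longleftrightarrow> F \<subseteq> E \<and>
     (\<forall>x\<in>V. \<exists>u v w. comp F x = {u, v, w} \<and> u \<noteq> v \<and> v \<noteq> w \<and> u \<noteq> w \<and>
        {e\<in>F. e \<subseteq> {u, v, w}} = {{u, v}, {v, w}})"

datatype 'a yvert = Cp nat 'a | Zv nat

text \<open>Y(A,a) with the labelling a_1,a_2,a_3 of the neighbours of a.
  Copy i of vertex x is Cp i x, new vertices are Zv 1, Zv 2, Zv 3.\<close>
definition Y_V :: "'a set \<Rightarrow> 'a \<Rightarrow> 'a yvert set" where
  "Y_V V a = {Cp i x | i x. i \<in> {1,2,3} \<and> x \<in> V - {a}} \<union> {Zv j | j. j \<in> {1,2,3}}"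

definition Y_E :: "'a set set \<Rightarrow> 'a \<Rightarrow> 'a \<Rightarrow> 'a \<Rightarrow> 'a \<Rightarrow> 'a yvert set set" where
  "Y_E E a a1 a2 a3 =
     {{Cp i x, Cp i y} | i x y. i \<in> {1,2,3} \<and> {x, y} \<in> E \<and> x \<noteq> a \<and> y \<noteq> a}
     \<union> {{Zv j, Cp i ([a1, a2, a3] ! (j - 1))} | i j. i \<in> {1,2,3} \<and> j \<in> {1,2,3}}"

end

theory Submission
  imports Defs
begin

text \<open>Suppose F were a \<Lambda>-factor of G = Y(A,a). For a copy i, let Z_part i be the set of
  vertices x of A - a whose i-th copy lies on one of the paths of F through z_1, z_2, z_3. The
  other vertices of copy i are covered by paths of F inside that copy, so
  |Z_part i| \<equiv> v(A) - 1 \<equiv> 2 (mod 3); the (at most three) paths through the z_j have at most nine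
  vertices, three of which are the z_j, hence |Z_part i| = 2 for every i.
  Now look at the path of F through z_1. If z_1 is an end, the path is z_1 a_1^i b^i, and
  a a_1 b together with the paths of F inside copy i is a \<Lambda>-factor of A containing a a_1.
  If z_1 is the centre, with leaf a_1^i, then the second vertex y of Z_part i cannot lie on a
  path with end z_j (that path would put two further vertices into Z_part i), so it is a leaf
  a_j^i of the path centred at z_j, and a_1 a a_j together with the paths inside copy i again
  gives a \<Lambda>-factor of A containing a a_1.\<close>

lemma comp_refl [simp]: "x \<in> comp F x"
  by (simp add: comp_def)

lemma edge_in_comp: "{x, y} \<in> F \<Longrightarrow> y \<in> comp F x"
  unfolding comp_def by (simp add: r_into_rtranclp)

lemma comp_trans: "y \<in> comp F x \<Longrightarrow> z \<in> comp F y \<Longrightarrow> z \<in> comp F x"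
  unfolding comp_def by (auto intro: rtranclp_trans)

lemma comp_sym: "y \<in> comp F x \<Longrightarrow> x \<in> comp F y"
  unfolding comp_def mem_Collect_eq
proof (induction rule: rtranclp_induct)
  case (step y z)
  have "{z, y} \<in> F" using step(2) by (simp add: insert_commute)
  then show ?case using step(3) by (rule converse_rtranclp_into_rtranclp)
qed simp

lemma comp_eq: "y \<in> comp F x \<Longrightarrow> comp F y = comp F x"
  by (meson comp_sym comp_trans subsetI subset_antisym)

lemma comp_disjoint: "comp F x \<noteq> comp F y \<Longrightarrow> comp F x \<inter> comp F y = {}"
  by (metis disjoint_iff comp_eq)

lemma comp_edge_eq: "{x, y} \<in> F \<Longrightarrow> comp F y = comp F x"
  by (rule comp_eq[OF edge_in_comp])

lemma comp_subset_closed: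
  assumes "x \<in> S" and "\<And>y. y \<in> S \<Longrightarrow> nbhd F y \<subseteq> S"
  shows "comp F x \<subseteq> S"
proof
  fix z assume "z \<in> comp F x"
  then have "(\<lambda>u w. {u, w} \<in> F)\<^sup>*\<^sup>* x z" by (simp add: comp_def)
  then show "z \<in> S"
    by (induction rule: rtranclp_induct) (use assms in \<open>auto simp: nbhd_def\<close>)
qed

lemma doubleton_eq_if_card_2: "card S = 2 \<Longrightarrow> x \<in> S \<Longrightarrow> y \<in> S \<Longrightarrow> x \<noteq> y \<Longrightarrow> S = {x, y}"
  by (auto simp: card_2_iff)

lemma nbhd_empty [simp]: "nbhd {} z = {}"
  by (simp add: nbhd_def)

lemma nbhd_insert_edge [simp]:
  "nbhd (insert {p, q} F) z = nbhd F z \<union> (if z = p then {q} else {}) \<union> (if z = q then {p} else {})"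
  by (auto simp: nbhd_def doubleton_eq_iff)

lemma nbhd_Un: "nbhd (X \<union> Y) z = nbhd X z \<union> nbhd Y z"
  by (auto simp: nbhd_def)

lemma nbhd_eq_empty_if_not_in_Union: "z \<notin> \<Union>X \<Longrightarrow> nbhd X z = {}"
  by (auto simp: nbhd_def)

lemma mod_3_eq_2_if_dvd_complement:
  "3 dvd (n::nat) \<Longrightarrow> 3 dvd n - 1 - b \<Longrightarrow> b < n \<Longrightarrow> b mod 3 = 2"
  by presburger

definition path3 :: "'a set set \<Rightarrow> 'a \<Rightarrow> 'a \<Rightarrow> 'a \<Rightarrow> bool" where
  "path3 F u v w \<longleftrightarrow> u \<noteq> v \<and> v \<noteq> w \<and> u \<noteq> w \<and>
     nbhd F u = {v} \<and> nbhd F v = {u, w} \<and> nbhd F w = {v}"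

lemma path3_rev: "path3 F u v w \<Longrightarrow> path3 F w v u"
  by (auto simp: path3_def insert_commute)

lemma path3_edges: "path3 F u v w \<Longrightarrow> {u, v} \<in> F \<and> {v, w} \<in> F"
  by (auto simp: path3_def nbhd_def set_eq_iff)

lemma path3_comp:
  assumes p: "path3 F u v w" and x: "x \<in> {u, v, w}"
  shows "comp F x = {u, v, w}"
proof
  show "comp F x \<subseteq> {u, v, w}"
    using x p by (intro comp_subset_closed) (auto simp: path3_def)
  have uv: "{u, v} \<in> F" and vw: "{v, w} \<in> F"
    using path3_edges[OF p] by simp_all
  have wv: "{w, v} \<in> F" and vu: "{v, u} \<in> F"
    using uv vw by (simp_all add: insert_commute)
  have "v \<in> comp F x"
    using x edge_in_comp[OF uv] edge_in_comp[OF wv] by auto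
  then have "comp F v = comp F x" by (rule comp_eq)
  moreover have "{u, v, w} \<subseteq> comp F v"
    using edge_in_comp[OF vu] edge_in_comp[OF vw] by auto
  ultimately show "{u, v, w} \<subseteq> comp F x" by simp
qed

lemma lambda_factor_iff_path3:
  assumes E: "\<forall>e\<in>E. \<exists>x y. x \<noteq> y \<and> e = {x, y}"
  shows "lambda_factor V E F \<longleftrightarrow>
    F \<subseteq> E \<and> (\<forall>x\<in>V. \<exists>u v w. path3 F u v w \<and> x \<in> {u, v, w})"
proof (intro iffI conjI ballI; (elim conjE)?)
  assume "lambda_factor V E F"
  then show "F \<subseteq> E" by (simp add: lambda_factor_def)
next
  fix x assume lf: "lambda_factor V E F" and x: "x \<in> V"
  have "\<forall>x\<in>V. \<exists>u v w. comp F x = {u, v, w} \<and> u \<noteq> v \<and> v \<noteq> w \<and> u \<noteq> w \<and>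
      {e\<in>F. e \<subseteq> {u, v, w}} = {{u, v}, {v, w}}"
    using lf unfolding lambda_factor_def by (rule conjunct2)
  with x obtain u v w where c: "comp F x = {u, v, w}" and d: "u \<noteq> v" "v \<noteq> w" "u \<noteq> w"
    and H: "{e\<in>F. e \<subseteq> {u, v, w}} = {{u, v}, {v, w}}"
    by (elim ballE exE conjE) blast+
  have "nbhd F y = {z. {y, z} = {u, v} \<or> {y, z} = {v, w}}" if y: "y \<in> {u, v, w}" for y
  proof -
    have "comp F y = {u, v, w}" using comp_eq[of y F x] c y by simp
    then have "{y, z} \<in> F \<longleftrightarrow> {y, z} \<in> {e\<in>F. e \<subseteq> {u, v, w}}" for z
      using y edge_in_comp[of y z F] by blast
    then show ?thesis using H by (auto simp: nbhd_def)
  qed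
  then have "path3 F u v w"
    using d by (auto simp: path3_def doubleton_eq_iff)
  moreover have "x \<in> {u, v, w}" using c comp_refl by metis
  ultimately show "\<exists>u v w. path3 F u v w \<and> x \<in> {u, v, w}" by blast
next
  assume FE: "F \<subseteq> E" and P: "\<forall>x\<in>V. \<exists>u v w. path3 F u v w \<and> x \<in> {u, v, w}"
  show "lambda_factor V E F" unfolding lambda_factor_def
  proof (intro conjI FE ballI)
    fix x assume "x \<in> V"
    with P obtain u v w where p: "path3 F u v w" and x: "x \<in> {u, v, w}" by blast
    have "{e\<in>F. e \<subseteq> {u, v, w}} = {{u, v}, {v, w}}"
    proof (intro equalityI subsetI)
      fix e assume e: "e \<in> {e\<in>F. e \<subseteq> {u, v, w}}"
      then have "e \<in> E" using FE by blast
      with E obtain s t where "s \<noteq> t" and st: "e = {s, t}" by blast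
      with e have "s \<in> {u, v, w}" "t \<in> nbhd F s" by (auto simp: nbhd_def)
      with p show "e \<in> {{u, v}, {v, w}}"
        using st by (auto simp: path3_def doubleton_eq_iff)
    qed (use path3_edges[OF p] in auto)
    then show "\<exists>u v w. comp F x = {u, v, w} \<and> u \<noteq> v \<and> v \<noteq> w \<and> u \<noteq> w \<and>
        {e\<in>F. e \<subseteq> {u, v, w}} = {{u, v}, {v, w}}"
      using path3_comp[OF p x] p by (auto simp: path3_def)
  qed
qed

lemma card_Y_V:
  assumes "finite V" and "a \<in> V"
  shows "card (Y_V V a) = 3 * card V"
proof -
  have split: "Y_V V a = (\<lambda>(i, x). Cp i x) ` ({1, 2, 3} \<times> (V - {a})) \<union> Zv ` {1, 2, 3}"
    by (auto simp: Y_V_def)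
  have "card ((\<lambda>(i, x). Cp i x) ` ({1, 2, 3::nat} \<times> (V - {a}))) = 3 * (card V - 1)"
    using assms by (subst card_image) (auto simp: inj_on_def card_cartesian_product)
  moreover have "card (Y_V V a) = card ((\<lambda>(i, x). Cp i x) ` ({1, 2, 3::nat} \<times> (V - {a}))) + 3"
    unfolding split using assms by (subst card_Un_disjoint) auto
  moreover have "card V > 0" using assms card_gt_0_iff by blast
  ultimately show ?thesis by simp
qed

locale Y_graph =
  fixes V :: "'a set" and E :: "'a set set" and a a1 a2 a3 :: 'a
  assumes graph: "simple_graph V E" and a_in_V: "a \<in> V"
    and a1_a2: "a1 \<noteq> a2" and a1_a3: "a1 \<noteq> a3" and a2_a3: "a2 \<noteq> a3"
    and nbhd_a: "nbhd E a = {a1, a2, a3}"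
begin

abbreviation "YV \<equiv> Y_V V a"
abbreviation "YE \<equiv> Y_E E a a1 a2 a3"

definition nbr :: "nat \<Rightarrow> 'a" where
  "nbr j = [a1, a2, a3] ! (j - 1)"

lemma nbr_1: "nbr 1 = a1"
  by (simp add: nbr_def)

lemma finite_V: "finite V"
  using graph by (simp add: simple_graph_def)

lemma edge_E: "{x, y} \<in> E \<Longrightarrow> x \<in> V \<and> y \<in> V \<and> x \<noteq> y"
  using graph unfolding simple_graph_def by (auto simp: doubleton_eq_iff)

lemma E_doubleton: "\<forall>e\<in>E. \<exists>x y. x \<noteq> y \<and> e = {x, y}"
  using graph unfolding simple_graph_def by blast

lemma nbr_edge: "j \<in> {1, 2, 3} \<Longrightarrow> {a, nbr j} \<in> E"
proof -
  assume "j \<in> {1, 2, 3}"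
  then have "nbr j \<in> nbhd E a" unfolding nbhd_a by (auto simp: nbr_def)
  then show ?thesis by (simp add: nbhd_def)
qed

lemma a_a1_edge: "{a, a1} \<in> E"
  using nbr_edge[of 1] unfolding nbr_1 by simp

lemma nbr_in_V: "j \<in> {1, 2, 3} \<Longrightarrow> nbr j \<in> V - {a}"
  using edge_E[OF nbr_edge] by auto

lemma nbr_eq_iff: "j \<in> {1, 2, 3} \<Longrightarrow> k \<in> {1, 2, 3} \<Longrightarrow> nbr j = nbr k \<longleftrightarrow> j = k"
  using a1_a2 a1_a3 a2_a3 by (auto simp: nbr_def)

lemma Y_E_alt: "YE =
    {{Cp i x, Cp i y} | i x y. i \<in> {1, 2, 3} \<and> {x, y} \<in> E \<and> x \<noteq> a \<and> y \<noteq> a} \<union>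
    {{Zv j, Cp i (nbr j)} | i j. i \<in> {1, 2, 3} \<and> j \<in> {1, 2, 3}}"
  by (simp add: Y_E_def nbr_def)

lemma Y_V_Cp: "Cp i x \<in> YV \<longleftrightarrow> i \<in> {1, 2, 3} \<and> x \<in> V - {a}"
  by (auto simp: Y_V_def)

lemma Y_V_Zv: "Zv j \<in> YV \<longleftrightarrow> j \<in> {1, 2, 3}"
  by (auto simp: Y_V_def)

lemma Y_E_Cp_Cp: "{Cp i x, Cp k y} \<in> YE \<longleftrightarrow> i = k \<and> i \<in> {1, 2, 3} \<and> {x, y} \<in> E \<and> x \<noteq> a \<and> y \<noteq> a"
  unfolding Y_E_alt by (auto simp: doubleton_eq_iff insert_commute)

lemma Y_E_Zv: "{Zv j, z} \<in> YE \<longleftrightarrow> j \<in> {1, 2, 3} \<and> (\<exists>i\<in>{1, 2, 3}. z = Cp i (nbr j))"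
  unfolding Y_E_alt by (auto simp: doubleton_eq_iff)

lemma Y_E_Cp_Zv: "{Cp i x, Zv j} \<in> YE \<longleftrightarrow> i \<in> {1, 2, 3} \<and> j \<in> {1, 2, 3} \<and> x = nbr j"
  using Y_E_Zv[of j "Cp i x"] by (auto simp: insert_commute)

lemma Y_E_doubleton: "\<forall>e\<in>YE. \<exists>x y. x \<noteq> y \<and> e = {x, y}"
  unfolding Y_E_alt using edge_E by blast

lemma Y_E_subset_Y_V: "e \<in> YE \<Longrightarrow> e \<subseteq> YV"
  unfolding Y_E_alt using edge_E nbr_in_V by (auto simp: Y_V_Cp Y_V_Zv)

end

locale Y_factor = Y_graph +
  fixes F :: "'a yvert set set"
  assumes factor: "lambda_factor YV YE F"
begin

lemma F_subset: "F \<subseteq> YE"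
  using factor by (simp add: lambda_factor_def)

lemma path3_through:
  assumes "x \<in> YV"
  obtains u v w where "path3 F u v w" and "x = u \<or> x = v"
proof -
  obtain u v w where p: "path3 F u v w" and x: "x \<in> {u, v, w}"
    using factor assms by (auto simp: lambda_factor_iff_path3[OF Y_E_doubleton])
  show thesis
  proof (cases "x = w")
    case True
    then show ?thesis using that[OF path3_rev[OF p]] by simp
  next
    case False
    then show ?thesis using that[OF p] x by simp
  qed
qed

lemma comp_subset_Y_V: "x \<in> YV \<Longrightarrow> comp F x \<subseteq> YV"
  using F_subset Y_E_subset_Y_V by (intro comp_subset_closed) (auto simp: nbhd_def)

lemma card_comp: "x \<in> YV \<Longrightarrow> card (comp F x) = 3"
  by (rule path3_through) (auto simp: path3_comp path3_def)

definition Z_part :: "nat \<Rightarrow> 'a set" where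
  "Z_part i = {x. \<exists>j\<in>{1, 2, 3}. Cp i x \<in> comp F (Zv j)}"

lemma Z_partI: "j \<in> {1, 2, 3} \<Longrightarrow> Cp i x \<in> comp F (Zv j) \<Longrightarrow> x \<in> Z_part i"
  by (auto simp: Z_part_def)

lemma Z_part_subset: "Z_part i \<subseteq> V - {a}"
proof
  fix x assume "x \<in> Z_part i"
  then obtain j where "j \<in> {1, 2, 3}" and "Cp i x \<in> comp F (Zv j)" by (auto simp: Z_part_def)
  then have "Cp i x \<in> YV" using comp_subset_Y_V[of "Zv j"] by (auto simp: Y_V_Zv)
  then show "x \<in> V - {a}" by (simp add: Y_V_Cp)
qed

lemma finite_Z_part: "finite (Z_part i)"
  using Z_part_subset finite_V finite_subset by blast

lemma comp_Cp_outside_Z_part: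
  assumes i: "i \<in> {1, 2, 3}" and x: "x \<in> V - {a} - Z_part i"
  shows "comp F (Cp i x) \<subseteq> Cp i ` (V - {a} - Z_part i)"
proof (rule comp_subset_closed)
  show "Cp i x \<in> Cp i ` (V - {a} - Z_part i)" using x by simp
next
  fix y assume "y \<in> Cp i ` (V - {a} - Z_part i)"
  then obtain x' where y: "y = Cp i x'" and x': "x' \<in> V - {a} - Z_part i" by blast
  show "nbhd F y \<subseteq> Cp i ` (V - {a} - Z_part i)"
  proof
    fix z assume "z \<in> nbhd F y"
    then have yz: "{y, z} \<in> F" by (simp add: nbhd_def)
    then have z_y: "comp F z = comp F y" by (rule comp_edge_eq)
    show "z \<in> Cp i ` (V - {a} - Z_part i)"
    proof (cases z)
      case (Cp k y')
      then have "k = i" "{x', y'} \<in> E" "y' \<noteq> a"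
        using yz F_subset y by (auto simp: Y_E_Cp_Cp)
      moreover have "y' \<notin> Z_part i"
      proof
        assume "y' \<in> Z_part i"
        then obtain j where j: "j \<in> {1, 2, 3}" "z \<in> comp F (Zv j)"
          using Cp \<open>k = i\<close> by (auto simp: Z_part_def)
        then have "comp F (Zv j) = comp F y" using comp_eq[OF j(2)] z_y by simp
        then have "Cp i x' \<in> comp F (Zv j)" using comp_refl y by metis
        then show False using x' j(1) by (auto simp: Z_part_def)
      qed
      ultimately show ?thesis using Cp edge_E by blast
    next
      case (Zv j)
      then have "j \<in> {1, 2, 3}" using yz F_subset y by (auto simp: Y_E_Cp_Zv)
      moreover have "y \<in> comp F (Zv j)" using z_y Zv comp_refl by metis
      ultimately show ?thesis using x' y by (auto simp: Z_part_def)
    qed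
  qed
qed

lemma three_dvd_card_outside_Z_part:
  assumes i: "i \<in> {1, 2, 3}"
  shows "3 dvd card (V - {a} - Z_part i)"
proof -
  define U where "U = V - {a} - Z_part i"
  define C where "C = (\<lambda>x. comp F (Cp i x)) ` U"
  have "Cp i ` U = \<Union>C"
  proof
    show "Cp i ` U \<subseteq> \<Union>C" by (auto simp: C_def intro!: bexI comp_refl)
    show "\<Union>C \<subseteq> Cp i ` U" using comp_Cp_outside_Z_part[OF i] by (auto simp: C_def U_def)
  qed
  moreover have "3 * card C = card (\<Union>C)"
  proof (rule card_partition)
    show "finite C" using finite_V by (simp add: C_def U_def)
    show "finite (\<Union>C)"
      using \<open>Cp i ` U = \<Union>C\<close> finite_V by (metis U_def finite_Diff finite_imageI)
    show "card c = 3" if "c \<in> C" for c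
    proof -
      from that obtain x where "x \<in> U" and "c = comp F (Cp i x)" by (auto simp: C_def)
      then show ?thesis using i card_comp[of "Cp i x"] by (simp add: U_def Y_V_Cp)
    qed
    show "c \<inter> d = {}" if cd: "c \<in> C" "d \<in> C" "c \<noteq> d" for c d
    proof -
      obtain x y where "c = comp F (Cp i x)" "d = comp F (Cp i y)" using cd(1,2) by (auto simp: C_def)
      then show ?thesis using comp_disjoint cd(3) by simp
    qed
  qed
  moreover have "card (Cp i ` U) = card U" by (simp add: card_image inj_on_def)
  ultimately show ?thesis unfolding U_def by (metis dvd_triv_left)
qed

lemma sum_card_Z_part_le: "(\<Sum>i\<in>{1, 2, 3}. card (Z_part i)) \<le> 6"
proof -
  define Q where "Q = (\<Union>j\<in>{1, 2, 3}. comp F (Zv j))"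
  have "card Q \<le> (\<Sum>j\<in>{1, 2, 3::nat}. card (comp F (Zv j)))"
    unfolding Q_def by (rule card_UN_le) simp
  also have "\<dots> = 9" using card_comp by (simp add: Y_V_Zv)
  finally have "card Q \<le> 9" .
  have "finite Q" using card_comp unfolding Q_def by (auto simp: Y_V_Zv intro: card_ge_0_finite)
  define X where "X = (\<Union>i\<in>{1, 2, 3}. Cp i ` Z_part i) \<union> Zv ` {1, 2, 3}"
  have "X \<subseteq> Q"
  proof
    fix y assume "y \<in> X"
    then consider (copy) i x where "x \<in> Z_part i" and "y = Cp i x"
      | (new) j where "j \<in> {1, 2, 3}" and "y = Zv j"
      by (auto simp: X_def)
    then show "y \<in> Q"
    proof cases
      case copy
      then obtain j where "j \<in> {1, 2, 3}" and "y \<in> comp F (Zv j)" by (auto simp: Z_part_def)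
      then show ?thesis unfolding Q_def by (rule UN_I)
    next
      case new
      then show ?thesis unfolding Q_def by (intro UN_I[of j]) simp_all
    qed
  qed
  then have "card X \<le> 9" using card_mono[OF \<open>finite Q\<close>] \<open>card Q \<le> 9\<close> by (meson order_trans)
  moreover have "card (\<Union>i\<in>{1, 2, 3}. Cp i ` Z_part i) = (\<Sum>i\<in>{1, 2, 3}. card (Z_part i))"
    using finite_Z_part by (subst card_UN_disjoint) (auto simp: card_image inj_on_def)
  moreover have "card X = card (\<Union>i\<in>{1, 2, 3}. Cp i ` Z_part i) + 3"
    unfolding X_def using finite_Z_part by (subst card_Un_disjoint) auto
  ultimately show ?thesis by simp
qed

lemma card_Z_part_mod_3:
  assumes "3 dvd card V" and i: "i \<in> {1, 2, 3}"
  shows "card (Z_part i) mod 3 = 2"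
proof -
  have "card (V - {a} - Z_part i) = card V - 1 - card (Z_part i)"
    using Z_part_subset finite_Z_part a_in_V finite_V by (simp add: card_Diff_subset)
  then have "3 dvd card V - 1 - card (Z_part i)"
    using three_dvd_card_outside_Z_part[OF i] by simp
  moreover have "card (Z_part i) < card V"
    using psubset_card_mono[OF finite_V] Z_part_subset a_in_V by blast
  ultimately show ?thesis by (intro mod_3_eq_2_if_dvd_complement[OF assms(1)])
qed

lemma card_Z_part:
  assumes "3 dvd card V" and i: "i \<in> {1, 2, 3}"
  shows "card (Z_part i) = 2"
proof -
  have ge: "card (Z_part k) \<ge> 2" if "k \<in> {1, 2, 3}" for k
    using card_Z_part_mod_3[OF assms(1) that] by (metis mod_less_eq_dividend)
  have "card (Z_part 1) + card (Z_part 2) + card (Z_part 3) \<le> 6"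
    using sum_card_Z_part_le by simp
  then show ?thesis using i ge[of 1] ge[of 2] ge[of 3] by auto
qed

lemma Zv_path_cases:
  assumes j: "j \<in> {1, 2, 3}"
  obtains (endpoint) p x where "p \<in> {1, 2, 3}" and "path3 F (Zv j) (Cp p (nbr j)) (Cp p x)"
    | (centre) p q where "p \<in> {1, 2, 3}" and "path3 F (Cp p (nbr j)) (Zv j) (Cp q (nbr j))"
proof -
  have nbhd_Zv: "\<exists>p\<in>{1, 2, 3}. z = Cp p (nbr j)" if "z \<in> nbhd F (Zv j)" for z
    using that F_subset by (auto simp: nbhd_def Y_E_Zv)
  have "Zv j \<in> YV" using j by (simp add: Y_V_Zv)
  then obtain u v w where "path3 F u v w" and "Zv j = u \<or> Zv j = v"
    by (rule path3_through)
  then consider "path3 F (Zv j) v w" | "path3 F u (Zv j) w" by blast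
  then show thesis
  proof cases
    case 1
    then obtain p where p: "p \<in> {1, 2, 3}" and v: "v = Cp p (nbr j)"
      using nbhd_Zv by (auto simp: path3_def)
    have vw: "{Cp p (nbr j), w} \<in> YE" using 1 F_subset v by (auto simp: path3_def nbhd_def)
    show thesis
    proof (cases w)
      case (Cp p' x)
      then show thesis using vw 1 v endpoint[OF p] by (auto simp: Y_E_Cp_Cp)
    next
      case (Zv k)
      then show thesis using vw 1 j nbr_eq_iff by (auto simp: Y_E_Cp_Zv path3_def)
    qed
  next
    case 2
    then have "u \<in> nbhd F (Zv j)" and "w \<in> nbhd F (Zv j)" by (auto simp: path3_def)
    then obtain p q where "p \<in> {1, 2, 3}" and "u = Cp p (nbr j)" and "w = Cp q (nbr j)"
      using nbhd_Zv by meson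
    then show thesis using centre 2 by simp
  qed
qed

definition copy_edges :: "nat \<Rightarrow> 'a set set" where
  "copy_edges i = {{x, y} | x y. {Cp i x, Cp i y} \<in> F}"

lemma nbhd_copy_edges: "nbhd (copy_edges i) x = {y. Cp i y \<in> nbhd F (Cp i x)}"
  unfolding nbhd_def copy_edges_def by (auto simp: doubleton_eq_iff insert_commute)

lemma copy_edges_subset: "copy_edges i \<subseteq> E"
  using F_subset by (auto simp: copy_edges_def Y_E_Cp_Cp)

lemma nbhd_copy_edges_a: "nbhd (copy_edges i) a = {}"
proof -
  have "Cp i y \<notin> nbhd F (Cp i a)" for y
    using F_subset by (auto simp: nbhd_def Y_E_Cp_Cp)
  then show ?thesis by (simp add: nbhd_copy_edges)
qed

lemma path3_copy_edges: "path3 F (Cp i u) (Cp i v) (Cp i w) \<Longrightarrow> path3 (copy_edges i) u v w"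
  by (auto simp: path3_def nbhd_copy_edges)

lemma path3_copy_edges_outside_Z_part:
  assumes i: "i \<in> {1, 2, 3}" and x: "x \<in> V - {a} - Z_part i"
  obtains u v w where "path3 (copy_edges i) u v w" and "x \<in> {u, v, w}"
    and "{u, v, w} \<subseteq> V - {a} - Z_part i"
proof -
  have "Cp i x \<in> YV" using i x by (simp add: Y_V_Cp)
  then obtain u0 v0 w0 where p: "path3 F u0 v0 w0" and "Cp i x = u0 \<or> Cp i x = v0"
    by (rule path3_through)
  then have "comp F (Cp i x) = {u0, v0, w0}" using path3_comp[OF p, of "Cp i x"] by auto
  then have "u0 \<in> Cp i ` (V - {a} - Z_part i)" "v0 \<in> Cp i ` (V - {a} - Z_part i)"
    "w0 \<in> Cp i ` (V - {a} - Z_part i)"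
    using comp_Cp_outside_Z_part[OF i x] by auto
  then obtain u v w where uvw: "u0 = Cp i u" "v0 = Cp i v" "w0 = Cp i w"
    and S: "{u, v, w} \<subseteq> V - {a} - Z_part i"
    by (elim imageE) simp
  have "path3 (copy_edges i) u v w" using p uvw by (simp add: path3_copy_edges)
  moreover have "x \<in> {u, v, w}" using \<open>Cp i x = u0 \<or> Cp i x = v0\<close> uvw by auto
  ultimately show thesis using that S by blast
qed

lemma lambda_factor_extend_copy:
  assumes i: "i \<in> {1, 2, 3}" and X: "X \<subseteq> E" "\<Union>X \<subseteq> insert a (Z_part i)"
    and p: "path3 (X \<union> copy_edges i) u v w" and uvw: "{u, v, w} = insert a (Z_part i)"
  shows "lambda_factor V E (X \<union> copy_edges i)"
  unfolding lambda_factor_iff_path3[OF E_doubleton]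
proof (intro conjI ballI)
  show "X \<union> copy_edges i \<subseteq> E" using X copy_edges_subset by blast
  fix x assume "x \<in> V"
  show "\<exists>u v w. path3 (X \<union> copy_edges i) u v w \<and> x \<in> {u, v, w}"
  proof (cases "x \<in> insert a (Z_part i)")
    case True
    then show ?thesis using p uvw by blast
  next
    case False
    with \<open>x \<in> V\<close> obtain u' v' w' where p': "path3 (copy_edges i) u' v' w'" "x \<in> {u', v', w'}"
      and out: "{u', v', w'} \<subseteq> V - {a} - Z_part i"
      by (auto intro: path3_copy_edges_outside_Z_part[OF i])
    have "nbhd (X \<union> copy_edges i) z = nbhd (copy_edges i) z" if "z \<in> {u', v', w'}" for z
    proof -
      have "z \<notin> \<Union>X" using that out X(2) by auto
      then show ?thesis by (simp add: nbhd_Un nbhd_eq_empty_if_not_in_Union)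
    qed
    then have "path3 (X \<union> copy_edges i) u' v' w'" using p'(1) by (simp add: path3_def)
    then show ?thesis using p'(2) by blast
  qed
qed

lemma lambda_factor_if_Zv1_endpoint:
  assumes "3 dvd card V" and p: "p \<in> {1, 2, 3}" and path: "path3 F (Zv 1) (Cp p a1) (Cp p b)"
  shows "\<exists>F'. lambda_factor V E F' \<and> {a, a1} \<in> F'"
proof -
  have "a1 \<in> Z_part p" and "b \<in> Z_part p"
    using Z_partI[of 1 p] path3_comp[OF path] by auto
  moreover have "a1 \<noteq> b" using path by (simp add: path3_def)
  ultimately have Z: "Z_part p = {a1, b}"
    using card_Z_part[OF assms(1) p] by (simp add: doubleton_eq_if_card_2)
  then have "a1 \<noteq> a" and "b \<noteq> a" using Z_part_subset by auto
  define X where "X = {{a, a1}}"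
  have "nbhd F (Cp p a1) = {Zv 1, Cp p b}" and "nbhd F (Cp p b) = {Cp p a1}"
    using path by (simp_all add: path3_def)
  then have "nbhd (copy_edges p) a1 = {b}" and "nbhd (copy_edges p) b = {a1}"
    by (auto simp: nbhd_copy_edges)
  then have "nbhd (X \<union> copy_edges p) a = {a1}" and "nbhd (X \<union> copy_edges p) a1 = {a, b}"
    and "nbhd (X \<union> copy_edges p) b = {a1}"
    using \<open>a1 \<noteq> a\<close> \<open>b \<noteq> a\<close> \<open>a1 \<noteq> b\<close> by (auto simp: X_def nbhd_Un nbhd_copy_edges_a)
  then have P: "path3 (X \<union> copy_edges p) a a1 b"
    using \<open>a1 \<noteq> a\<close> \<open>b \<noteq> a\<close> \<open>a1 \<noteq> b\<close> by (simp add: path3_def)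
  moreover have "X \<subseteq> E" using a_a1_edge by (simp add: X_def)
  ultimately have "lambda_factor V E (X \<union> copy_edges p)"
    using Z by (intro lambda_factor_extend_copy[OF p _ _ P]) (auto simp: X_def)
  then show ?thesis by (auto simp: X_def)
qed

lemma Z_part_of_Zv1_centre:
  assumes "3 dvd card V" and p: "p \<in> {1, 2, 3}" and path: "path3 F (Cp p a1) (Zv 1) (Cp q a1)"
  obtains j where "j \<in> {1, 2, 3}" and "j \<noteq> 1" and "Z_part p = {a1, nbr j}"
    and "nbhd F (Cp p (nbr j)) = {Zv j}"
proof -
  have c1: "comp F (Zv 1) = {Cp p a1, Zv 1, Cp q a1}" using path3_comp[OF path] by simp
  then have "a1 \<in> Z_part p" using Z_partI[of 1 p] by simp
  moreover obtain y where "y \<in> Z_part p" and "y \<noteq> a1"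
    using card_Z_part[OF assms(1) p] by (metis card_2_iff insert_iff)
  ultimately have Z: "Z_part p = {a1, y}"
    using card_Z_part[OF assms(1) p] by (simp add: doubleton_eq_if_card_2)
  from \<open>y \<in> Z_part p\<close> obtain j where j: "j \<in> {1, 2, 3}" and y: "Cp p y \<in> comp F (Zv j)"
    by (auto simp: Z_part_def)
  have "j \<noteq> 1"
  proof
    assume "j = 1"
    then have "Cp p y \<in> {Cp p a1, Zv 1, Cp q a1}" using y c1 by simp
    then show False using \<open>y \<noteq> a1\<close> by simp
  qed
  then have "Zv j \<notin> comp F (Zv 1)" using c1 by simp
  from j show thesis
  proof (cases rule: Zv_path_cases)
    case (endpoint r x)
    then have cj: "comp F (Zv j) = {Zv j, Cp r (nbr j), Cp r x}" using path3_comp[OF endpoint(2)] by simp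
    then have "r = p" using y by auto
    then have "nbr j \<in> Z_part p" and "x \<in> Z_part p" using cj j by (simp_all add: Z_partI)
    moreover have "nbr j \<noteq> a1" using nbr_eq_iff[OF j, of 1] \<open>j \<noteq> 1\<close> nbr_1 by auto
    moreover have "x \<noteq> nbr j" using endpoint by (auto simp: path3_def)
    moreover have "x \<noteq> a1"
    proof
      assume "x = a1"
      then have "Cp p a1 \<in> comp F (Zv j)" using cj \<open>r = p\<close> by simp
      then have "comp F (Zv j) = comp F (Zv 1)"
        using comp_eq c1 by (metis insertI1)
      then show False using \<open>Zv j \<notin> comp F (Zv 1)\<close> comp_refl by metis
    qed
    ultimately show thesis using Z by auto
  next
    case (centre r s)
    then have "comp F (Zv j) = {Cp r (nbr j), Zv j, Cp s (nbr j)}" using path3_comp[OF centre(2)] by simp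
    then have "y = nbr j" and "p = r \<or> p = s" using y by auto
    then have "nbhd F (Cp p (nbr j)) = {Zv j}" using centre by (auto simp: path3_def)
    then show thesis using that j \<open>j \<noteq> 1\<close> Z \<open>y = nbr j\<close> by simp
  qed
qed

lemma lambda_factor_if_Zv1_centre:
  assumes "3 dvd card V" and p: "p \<in> {1, 2, 3}" and path: "path3 F (Cp p a1) (Zv 1) (Cp q a1)"
  shows "\<exists>F'. lambda_factor V E F' \<and> {a, a1} \<in> F'"
proof -
  obtain j where j: "j \<in> {1, 2, 3}" "j \<noteq> 1" and Z: "Z_part p = {a1, nbr j}"
    and leaf: "nbhd F (Cp p (nbr j)) = {Zv j}"
    using Z_part_of_Zv1_centre[OF assms] .
  have "nbr j \<noteq> a1" using nbr_eq_iff[OF j(1), of 1] j(2) nbr_1 by auto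
  have "a1 \<noteq> a" and "nbr j \<noteq> a" using Z Z_part_subset by auto
  have "nbhd F (Cp p a1) = {Zv 1}" using path by (simp add: path3_def)
  then have "nbhd (copy_edges p) a1 = {}" and "nbhd (copy_edges p) (nbr j) = {}"
    using leaf by (auto simp: nbhd_copy_edges)
  define X where "X = {{a, a1}, {a, nbr j}}"
  have "nbhd (X \<union> copy_edges p) a1 = {a}" and "nbhd (X \<union> copy_edges p) (nbr j) = {a}"
    and "nbhd (X \<union> copy_edges p) a = {a1, nbr j}"
    using \<open>nbr j \<noteq> a1\<close> \<open>a1 \<noteq> a\<close> \<open>nbr j \<noteq> a\<close> \<open>nbhd (copy_edges p) a1 = {}\<close>
      \<open>nbhd (copy_edges p) (nbr j) = {}\<close>
    by (auto simp: X_def nbhd_Un nbhd_copy_edges_a)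
  then have P: "path3 (X \<union> copy_edges p) a1 a (nbr j)"
    using \<open>nbr j \<noteq> a1\<close> \<open>a1 \<noteq> a\<close> \<open>nbr j \<noteq> a\<close> by (simp add: path3_def)
  moreover have "X \<subseteq> E" using a_a1_edge nbr_edge[OF j(1)] by (simp add: X_def)
  ultimately have "lambda_factor V E (X \<union> copy_edges p)"
    using Z by (intro lambda_factor_extend_copy[OF p _ _ P]) (auto simp: X_def)
  then show ?thesis by (auto simp: X_def)
qed

lemma lambda_factor_with_a_a1:
  assumes "3 dvd card V"
  shows "\<exists>F'. lambda_factor V E F' \<and> {a, a1} \<in> F'"
proof -
  have "1 \<in> {1, 2, 3::nat}" by simp
  then show ?thesis
  proof (cases rule: Zv_path_cases)
    case (endpoint p x)
    then show ?thesis using lambda_factor_if_Zv1_endpoint[OF assms] unfolding nbr_1 by blast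
  next
    case (centre p q)
    then show ?thesis using lambda_factor_if_Zv1_centre[OF assms] unfolding nbr_1 by blast
  qed
qed

end

theorem mainTheorem8:
  fixes V :: "'a set" and E :: "'a set set" and a a1 a2 a3 :: 'a
  assumes "cubic V E"
    and "card V mod 6 = 0"
    and "a \<in> V"
    and "a1 \<noteq> a2" and "a1 \<noteq> a3" and "a2 \<noteq> a3"
    and "nbhd E a = {a1, a2, a3}"
    and "\<not> (\<exists>F. lambda_factor V E F \<and> {a, a1} \<in> F)"
  shows "card (Y_V V a) mod 6 = 0 \<and>
         \<not> (\<exists>F. lambda_factor (Y_V V a) (Y_E E a a1 a2 a3) F)"
proof
  have graph: "simple_graph V E" using assms(1) by (simp add: cubic_def)
  then show "card (Y_V V a) mod 6 = 0"
    using card_Y_V[of V a] assms(2,3) by (auto simp: simple_graph_def)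
  show "\<not> (\<exists>F. lambda_factor (Y_V V a) (Y_E E a a1 a2 a3) F)"
  proof
    assume "\<exists>F. lambda_factor (Y_V V a) (Y_E E a a1 a2 a3) F"
    then obtain F where "lambda_factor (Y_V V a) (Y_E E a a1 a2 a3) F" ..
    then have "Y_factor V E a a1 a2 a3 F"
      using graph assms(3-7) by unfold_locales
    moreover have "3 dvd card V"
      using assms(2) dvd_trans[of 3 6 "card V"] by (simp add: dvd_eq_mod_eq_0)
    ultimately have "\<exists>F. lambda_factor V E F \<and> {a, a1} \<in> F"
      by (rule Y_factor.lambda_factor_with_a_a1)
    with assms(8) show False ..
  qed
qed

end
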